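(* Let $I$ be a finite tree, $I=I^+\sqcup I^-$ its bipartition, $\Gamma_0$ the alternating orientation in which every vertex of $I^+$ is a source, $\Sigma_+=\prod_{i\in I^+}\Sigma_i$ and $\Sigma_-=\prod_{i\in I^-}\Sigma_i$ (each regarded as a morphism $\Gamma_0\to\Gamma_0^{\mathrm{op}}$ or $\Gamma_0^{\mathrm{op}}\to\Gamma_0$, as composability requires). Then: (a) the automorphism group $\mathrm{Aut}_{R_0(I)}(\Gamma_0)$ is generated by $\Sigma_+\Sigma_-$ and $\Sigma_-\Sigma_+$; (b) the automorphism group $\mathrm{Aut}_{R(I)}(\Gamma_0)$ is generated by $D\Sigma_+$ and $D\Sigma_-$.
   Context: Let $I$ be a finite tree (connected, acyclic finite graph). $\mathrm{Quiv}(I)$ is the set of orientations of $I$. For $\Gamma\in\mathrm{Quiv}(I)$ and a vertex $i$ that is a source or sink of $\Gamma$, $s_i\Gamma$ is the orientation obtained by reversing all arrows at $i$; $\Gamma^{\mathrm{op}}$ is obtained by reversing all arrows. The groupoid $R_0(I)$ has object set $\mathrm{Quiv}(I)$ and is generated by elementary isomorphisms $\Sigma_i:\Gamma\to s_i\Gamma$ (one for each $\Gamma$ and each source or sink $i$ of $\Gamma$), subject to the relations (whenever both sides are defined): (R1) $\Sigma_i^2=1$; (R2) $\Sigma_i\Sigma_j=\Sigma_j\Sigma_i$ whenever $i,j$ are not adjacent in $I$. The groupoid $R(I)$ has the same objects and is generated by the $\Sigma_i$ together with elementary isomorphisms $D:\Gamma\to\Gamma^{\mathrm{op}}$ for all $\Gamma$,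 subject to (R1), (R2) and (R3) $D^2=1$, (R4) $D\Sigma_i=\Sigma_iD$ for all $i$ (whenever defined). Composition is written right-to-left (in $\Sigma_i\Sigma_j$, $\Sigma_j$ is applied first). $I=I^+\sqcup I^-$ is a decomposition into two subsets with no edges inside either subset (unique up to swapping). Products $\Sigma_\pm$ are independent of the order by (R2). *)

theory Defs
  imports Main
begin

definition simple_graph :: "'v set \<Rightarrow> ('v \<times> 'v) set \<Rightarrow> bool" where
  "simple_graph V E \<longleftrightarrow> finite V \<and> E \<subseteq> V \<times> V \<and> sym E \<and> (\<forall>v. (v, v) \<notin> E)"

definition is_cycle :: "('v \<times> 'v) set \<Rightarrow> 'v list \<Rightarrow> bool" where
  "is_cycle E cs \<longleftrightarrow> 3 \<le> length cs \<and> distinct cs \<and>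
     (\<forall>k. Suc k < length cs \<longrightarrow> (cs ! k, cs ! Suc k) \<in> E) \<and> (last cs, hd cs) \<in> E"

definition is_tree :: "'v set \<Rightarrow> ('v \<times> 'v) set \<Rightarrow> bool" where
  "is_tree V E \<longleftrightarrow> simple_graph V E \<and> V \<noteq> {} \<and>
     (\<forall>u\<in>V. \<forall>v\<in>V. (u, v) \<in> E\<^sup>*) \<and> \<not> (\<exists>cs. is_cycle E cs)"

definition is_orientation :: "('v \<times> 'v) set \<Rightarrow> ('v \<times> 'v) set \<Rightarrow> bool" where
  "is_orientation E Q \<longleftrightarrow> Q \<subseteq> E \<and> (\<forall>(a, b)\<in>E. (a, b) \<in> Q \<longleftrightarrow> (b, a) \<notin> Q)"

definition is_source :: "'v set \<Rightarrow> ('v \<times> 'v) set \<Rightarrow> 'v \<Rightarrow> bool" where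
  "is_source V Q i \<longleftrightarrow> i \<in> V \<and> (\<forall>a. (a, i) \<notin> Q)"

definition is_sink :: "'v set \<Rightarrow> ('v \<times> 'v) set \<Rightarrow> 'v \<Rightarrow> bool" where
  "is_sink V Q i \<longleftrightarrow> i \<in> V \<and> (\<forall>b. (i, b) \<notin> Q)"

definition refl_at :: "'v \<Rightarrow> ('v \<times> 'v) set \<Rightarrow> ('v \<times> 'v) set" where
  "refl_at i Q = {(a, b). if a = i \<or> b = i then (b, a) \<in> Q else (a, b) \<in> Q}"

datatype 'v gen = Sg 'v | Dg

text \<open>A letter is a generator label together with a flag: True means the formal inverse.
  Words are listed in order of application (first applied first).\<close>
type_synonym 'v letter = "'v gen \<times> bool"

fun act :: "'v gen \<Rightarrow> ('v \<times> 'v) set \<Rightarrow> ('v \<times> 'v) set" where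
  "act (Sg i) Q = refl_at i Q"
| "act Dg Q = Q\<inverse>"

text \<open>Whether the elementary isomorphism with given label is defined out of Q (resp. its formal
  inverse, which goes out of Q exactly when the generator goes into Q, i.e. under the same
  condition); allowD distinguishes R(I) (True) from R_0(I) (False).\<close>
fun gen_ok :: "'v set \<Rightarrow> bool \<Rightarrow> ('v \<times> 'v) set \<Rightarrow> 'v gen \<Rightarrow> bool" where
  "gen_ok V allowD Q (Sg i) \<longleftrightarrow> is_source V Q i \<or> is_sink V Q i"
| "gen_ok V allowD Q Dg \<longleftrightarrow> allowD"

fun walk :: "('v \<times> 'v) set \<Rightarrow> 'v letter list \<Rightarrow> ('v \<times> 'v) set" where
  "walk Q [] = Q"
| "walk Q (x # xs) = walk (act (fst x) Q) xs"

fun valid :: "'v set \<Rightarrow> bool \<Rightarrow> ('v \<times> 'v) set \<Rightarrow> 'v letter list \<Rightarrow> bool" where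
  "valid V allowD Q [] = True"
| "valid V allowD Q (x # xs) \<longleftrightarrow> gen_ok V allowD Q (fst x) \<and> valid V allowD (act (fst x) Q) xs"

text \<open>Defining relations, as pairs of words starting at Q: free groupoid relations
  (x x^-1 = 1, x^-1 x = 1), and (R1)-(R4) (R3, R4 only if allowD).
  Composition Sigma_i Sigma_j (right-to-left) is the word [Sg j, Sg i].\<close>
definition rel :: "'v set \<Rightarrow> ('v \<times> 'v) set \<Rightarrow> bool \<Rightarrow> ('v \<times> 'v) set
                    \<Rightarrow> 'v letter list \<Rightarrow> 'v letter list \<Rightarrow> bool" where
  "rel V E allowD Q u v \<longleftrightarrow>
     (\<exists>g b. u = [(g, b), (g, \<not> b)] \<and> v = [] \<and> valid V allowD Q u)
   \<or> (\<exists>i. u = [(Sg i, False), (Sg i, False)] \<and> v = [] \<and> valid V allowD Q u)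
   \<or> (\<exists>i j. (i, j) \<notin> E \<and> u = [(Sg j, False), (Sg i, False)] \<and> v = [(Sg i, False), (Sg j, False)]
           \<and> valid V allowD Q u \<and> valid V allowD Q v)
   \<or> (allowD \<and> u = [(Dg, False), (Dg, False)] \<and> v = [] \<and> valid V allowD Q u)
   \<or> (allowD \<and> (\<exists>i. u = [(Sg i, False), (Dg, False)] \<and> v = [(Dg, False), (Sg i, False)]
           \<and> valid V allowD Q u \<and> valid V allowD Q v))"

definition wstep :: "'v set \<Rightarrow> ('v \<times> 'v) set \<Rightarrow> bool \<Rightarrow> ('v \<times> 'v) set
                     \<Rightarrow> 'v letter list \<Rightarrow> 'v letter list \<Rightarrow> bool" where
  "wstep V E allowD Q w w' \<longleftrightarrow> valid V allowD Q w \<and>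
     (\<exists>a u v c. w = a @ u @ c \<and> w' = a @ v @ c \<and> rel V E allowD (walk Q a) u v)"

text \<open>Equality of morphisms out of Q: the equivalence closure of rewriting steps.\<close>
definition wequiv :: "'v set \<Rightarrow> ('v \<times> 'v) set \<Rightarrow> bool \<Rightarrow> ('v \<times> 'v) set
                      \<Rightarrow> 'v letter list \<Rightarrow> 'v letter list \<Rightarrow> bool" where
  "wequiv V E allowD Q = (\<lambda>x y. wstep V E allowD Q x y \<or> wstep V E allowD Q y x)\<^sup>*\<^sup>*"

definition inv_word :: "'v letter list \<Rightarrow> 'v letter list" where
  "inv_word w = rev (map (\<lambda>(g, b). (g, \<not> b)) w)"

text \<open>The automorphism group of Q (valid loops at Q modulo wequiv) is generated by the given loops.\<close>
definition generates_aut :: "'v set \<Rightarrow> ('v \<times> 'v) set \<Rightarrow> bool \<Rightarrow> ('v \<times> 'v) set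
                             \<Rightarrow> 'v letter list list \<Rightarrow> bool" where
  "generates_aut V E allowD Q gs \<longleftrightarrow>
     (\<forall>g\<in>set gs. valid V allowD Q g \<and> walk Q g = Q) \<and>
     (\<forall>w. valid V allowD Q w \<and> walk Q w = Q \<longrightarrow>
        (\<exists>ws. set ws \<subseteq> set gs \<union> inv_word ` set gs \<and> wequiv V E allowD Q w (concat ws)))"

end

theory Submission
  imports Defs
begin

text \<open>
  An orientation reachable from the alternating one is induced by a height function
  \<open>H : V \<Rightarrow> \<int>\<close> changing by exactly one along every edge (arrows point upwards), unique up to an
  additive constant on a connected graph. Sources and sinks are the local minima and maxima of
  \<open>H\<close>, and \<open>\<Sigma>\<^sub>i\<close> moves \<open>H i\<close> by two to the other side of all its neighbours, so
  \<open>\<Sigma>\<close>-words are paths of such flips. Relations (R1) and (R2) identify any two flip paths with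
  the same endpoints: each is equivalent to a geodesic for the potential \<open>\<Sum>\<^sub>v |H v - T v|\<close>
  (a step away from the target is cancelled by (R1)), and two geodesics differ only by (R2) by a
  diamond argument, because two distinct descending flips are never adjacent. By (R3) and (R4)
  every word is a \<open>\<Sigma>\<close>-word followed by \<open>D\<^sup>0\<close> or \<open>D\<^sup>1\<close>. Hence a loop at \<open>\<Gamma>\<^sub>0\<close> is
  determined, up to the relations, by the parity of its number of \<open>D\<close>'s and the height function
  it reaches; the latter is that of \<open>\<Gamma>\<^sub>0\<close> (even parity) or of \<open>\<Gamma>\<^sub>0\<^sup>o\<^sup>p\<close> (odd
  parity) shifted by an even constant, and products of the proposed generators realize every such
  pair.

  A single vertex has no neighbours to
  pin down the effect of \<open>\<Sigma>\<^sub>i\<close> on heights and is treated separately.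
\<close>

section \<open>Words in the groupoids\<close>

lemma walk_append [simp]: "walk Q (xs @ ys) = walk (walk Q xs) ys"
  by (induction xs arbitrary: Q) auto

lemma valid_append [simp]:
  "valid V D Q (xs @ ys) \<longleftrightarrow> valid V D Q xs \<and> valid V D (walk Q xs) ys"
  by (induction xs arbitrary: Q) auto

lemma mem_refl_at:
  "(a, b) \<in> refl_at i Q \<longleftrightarrow> (if a = i \<or> b = i then (b, a) \<in> Q else (a, b) \<in> Q)"
  unfolding refl_at_def by simp

lemma refl_at_refl_at [simp]: "refl_at i (refl_at i Q) = Q"
  by (rule set_eqI, clarify) (simp add: mem_refl_at)

lemma refl_at_commute: "refl_at i (refl_at j Q) = refl_at j (refl_at i Q)"
  by (rule set_eqI, clarify) (simp add: mem_refl_at)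

lemma refl_at_converse: "refl_at i (Q\<inverse>) = (refl_at i Q)\<inverse>"
  by (rule set_eqI, clarify) (simp add: mem_refl_at)

lemma act_act [simp]: "act g (act g Q) = Q"
  by (cases g) auto

lemma is_source_converse [simp]: "is_source V (Q\<inverse>) i = is_sink V Q i"
  and is_sink_converse [simp]: "is_sink V (Q\<inverse>) i = is_source V Q i"
  by (auto simp: is_source_def is_sink_def)

lemma is_source_refl_at [simp]: "is_source V (refl_at i Q) i = is_sink V Q i"
  and is_sink_refl_at [simp]: "is_sink V (refl_at i Q) i = is_source V Q i"
  by (auto simp: is_source_def is_sink_def mem_refl_at)

lemma gen_ok_act [simp]: "gen_ok V D (act g Q) g = gen_ok V D Q g"
  by (cases g) auto

lemma act_converse [simp]: "act g (Q\<inverse>) = (act g Q)\<inverse>"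
  by (cases g) (auto simp: refl_at_converse)

lemma gen_ok_converse [simp]: "gen_ok V D (Q\<inverse>) g = gen_ok V D Q g"
  by (cases g) auto

lemma walk_converse [simp]: "walk (Q\<inverse>) w = (walk Q w)\<inverse>"
  by (induction w arbitrary: Q) auto

lemma valid_converse [simp]: "valid V D (Q\<inverse>) w = valid V D Q w"
  by (induction w arbitrary: Q) auto

lemma rel_imp_same_walk:
  assumes "rel V E D Q u v"
  shows "valid V D Q u \<and> valid V D Q v \<and> walk Q u = walk Q v"
  using assms unfolding rel_def
  by (elim disjE exE conjE) (auto simp: refl_at_commute refl_at_converse)

lemma wstep_imp_same_walk:
  assumes "wstep V E D Q w w'"
  shows "valid V D Q w \<and> valid V D Q w' \<and> walk Q w' = walk Q w"
  using assms rel_imp_same_walk unfolding wstep_def by fastforce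

lemma wequiv_eq_symclp: "wequiv V E D Q = (symclp (wstep V E D Q))\<^sup>*\<^sup>*"
  unfolding wequiv_def symclp_def ..

lemma wequiv_refl [simp]: "wequiv V E D Q w w"
  unfolding wequiv_def by simp

lemma wequiv_sym: "wequiv V E D Q w w' \<Longrightarrow> wequiv V E D Q w' w"
  unfolding wequiv_eq_symclp by (rule rtranclp_symclp_sym)

lemma wequiv_trans [trans]: "wequiv V E D Q u v \<Longrightarrow> wequiv V E D Q v w \<Longrightarrow> wequiv V E D Q u w"
  unfolding wequiv_def by (rule rtranclp_trans)

lemma wequiv_imp_same_walk:
  assumes "wequiv V E D Q w w'" and "valid V D Q w"
  shows "valid V D Q w' \<and> walk Q w' = walk Q w"
  using assms(1) unfolding wequiv_def
  by (induction rule: rtranclp_induct) (use assms(2) wstep_imp_same_walk in fastforce)+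

lemma wstep_in_context:
  assumes "wstep V E D (walk Q a) u v" and "valid V D Q (a @ u @ c)"
  shows "wstep V E D Q (a @ u @ c) (a @ v @ c)"
proof -
  from assms(1) obtain a' u' v' c' where "u = a' @ u' @ c'" "v = a' @ v' @ c'"
    and "rel V E D (walk Q (a @ a')) u' v'"
    unfolding wstep_def by auto
  then show ?thesis
    using assms(2) unfolding wstep_def by (metis append.assoc)
qed

lemma wequiv_in_context:
  assumes "wequiv V E D (walk Q a) u v" and "valid V D Q (a @ u @ c)"
  shows "wequiv V E D Q (a @ u @ c) (a @ v @ c)"
  using assms(1) unfolding wequiv_def
proof (induction rule: rtranclp_induct)
  case (step y z)
  have "valid V D (walk Q a) y \<and> walk (walk Q a) y = walk (walk Q a) u"
    using wequiv_imp_same_walk step(1) assms(2) unfolding wequiv_def by fastforce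
  then have "valid V D Q (a @ y @ c)" using assms(2) by simp
  moreover from step(2) have "valid V D Q (a @ z @ c)" if "wstep V E D (walk Q a) z y"
    using wstep_imp_same_walk[OF that] \<open>valid V D Q (a @ y @ c)\<close> by simp
  ultimately have "symclp (wstep V E D Q) (a @ y @ c) (a @ z @ c)"
    using step(2) wstep_in_context by (metis symclp_def)
  with step(3) show ?case
    unfolding symclp_def by (simp add: rtranclp.rtrancl_into_rtrancl)
qed simp

lemma rel_imp_wequiv:
  assumes "rel V E D (walk Q a) u v" and "valid V D Q (a @ u @ c)"
  shows "wequiv V E D Q (a @ u @ c) (a @ v @ c)"
  using assms unfolding wequiv_def wstep_def by blast

lemma rel_cancel: "gen_ok V D Q g \<Longrightarrow> rel V E D Q [(g, b), (g, \<not> b)] []"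
  unfolding rel_def by auto

lemma rel_square: "gen_ok V D Q g \<Longrightarrow> rel V E D Q [(g, False), (g, False)] []"
  unfolding rel_def by (cases g) auto

lemma rel_Sigma_commute:
  "(i, j) \<notin> E \<Longrightarrow> valid V D Q [(Sg j, False), (Sg i, False)] \<Longrightarrow>
    valid V D Q [(Sg i, False), (Sg j, False)] \<Longrightarrow>
    rel V E D Q [(Sg j, False), (Sg i, False)] [(Sg i, False), (Sg j, False)]"
  unfolding rel_def by blast

lemma rel_D_Sigma_commute:
  "D \<Longrightarrow> gen_ok V D Q (Sg i) \<Longrightarrow>
    rel V E D Q [(Sg i, False), (Dg, False)] [(Dg, False), (Sg i, False)]"
  unfolding rel_def by (auto simp: refl_at_converse)

section \<open>Normal form of words\<close>

definition sigma_word :: "'v list \<Rightarrow> 'v letter list" where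
  "sigma_word xs = map (\<lambda>i. (Sg i, False)) xs"

definition D_power :: "nat \<Rightarrow> 'v letter list" where
  "D_power n = (if even n then [] else [(Dg, False)])"

fun sigma_letters :: "'v letter list \<Rightarrow> 'v list" where
  "sigma_letters [] = []"
| "sigma_letters ((Sg i, b) # w) = i # sigma_letters w"
| "sigma_letters ((Dg, b) # w) = sigma_letters w"

fun D_count :: "'v letter list \<Rightarrow> nat" where
  "D_count [] = 0"
| "D_count ((Sg i, b) # w) = D_count w"
| "D_count ((Dg, b) # w) = Suc (D_count w)"

lemma sigma_word_simps [simp]:
  "sigma_word [] = []"
  "sigma_word (i # xs) = (Sg i, False) # sigma_word xs"
  "sigma_word (xs @ ys) = sigma_word xs @ sigma_word ys"
  unfolding sigma_word_def by auto

lemma sigma_letters_append [simp]: "sigma_letters (xs @ ys) = sigma_letters xs @ sigma_letters ys"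
  by (induction xs rule: sigma_letters.induct) auto

lemma D_count_append [simp]: "D_count (xs @ ys) = D_count xs + D_count ys"
  by (induction xs rule: D_count.induct) auto

lemma sigma_letters_concat: "sigma_letters (concat ws) = concat (map sigma_letters ws)"
  by (induction ws) auto

lemma sigma_letters_replicate [simp]:
  "sigma_letters (replicate n (Sg i, b)) = replicate n i"
  "sigma_letters (replicate n (Dg, b)) = []"
  and D_count_replicate [simp]:
  "D_count (replicate n (Sg i, b)) = 0"
  "D_count (replicate n (Dg, b)) = n"
  by (induction n) auto

lemma sigma_letters_sigma_word [simp]: "sigma_letters (sigma_word xs) = xs"
  and D_count_sigma_word [simp]: "D_count (sigma_word xs) = 0"
  by (induction xs) auto

lemma D_count_valid_R0: "valid V False Q w \<Longrightarrow> D_count w = 0"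
  by (induction w arbitrary: Q rule: D_count.induct) auto

lemma wequiv_letter_positive:
  assumes "valid V D Q (a @ (g, b) # c)"
  shows "wequiv V E D Q (a @ (g, b) # c) (a @ (g, False) # c)"
proof (cases b)
  case True
  have ok: "gen_ok V D (walk Q a) g" using assms by simp
  \<comment> \<open>\<open>g\<^sup>-\<^sup>1 = g\<^sup>-\<^sup>1 g g = g\<close> by (R1) or (R3)\<close>
  have "wequiv V E D Q (a @ (g, True) # c) (a @ (g, True) # (g, False) # (g, False) # c)"
    using rel_imp_wequiv[of V E D Q "a @ [(g, True)]" "[(g, False), (g, False)]" "[]" c]
      rel_square[of V D "walk Q (a @ [(g, True)])" g E] assms ok True by (auto intro: wequiv_sym)
  also have "wequiv V E D Q \<dots> (a @ (g, False) # c)"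
    using rel_imp_wequiv[of V E D Q a "[(g, True), (g, False)]" "[]" "(g, False) # c"]
      rel_cancel[of V D "walk Q a" g E True] assms ok by simp
  finally show ?thesis using True by simp
qed simp

lemma wequiv_D_past_sigma_word:
  assumes "D" and "valid V D Q ((Dg, False) # sigma_word xs @ c)"
  shows "wequiv V E D Q ((Dg, False) # sigma_word xs @ c) (sigma_word xs @ (Dg, False) # c)"
  using assms(2)
proof (induction xs arbitrary: Q)
  case (Cons i xs)
  have ok: "gen_ok V D Q (Sg i)" using Cons.prems by auto
  have r: "rel V E D Q [(Sg i, False), (Dg, False)] [(Dg, False), (Sg i, False)]"
    by (rule rel_D_Sigma_commute[OF assms(1) ok])
  have "wequiv V E D Q ([] @ [(Sg i, False), (Dg, False)] @ sigma_word xs @ c)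
      ([] @ [(Dg, False), (Sg i, False)] @ sigma_word xs @ c)"
    by (rule rel_imp_wequiv) (use r rel_imp_same_walk[OF r] Cons.prems in auto)
  then have "wequiv V E D Q ((Dg, False) # (Sg i, False) # sigma_word xs @ c)
      ((Sg i, False) # (Dg, False) # sigma_word xs @ c)"
    using wequiv_sym by fastforce
  also have "wequiv V E D Q \<dots> ((Sg i, False) # sigma_word xs @ (Dg, False) # c)"
    using wequiv_in_context[of V E D Q "[(Sg i, False)]" _ _ "[]"] Cons.IH[of "refl_at i Q"]
      Cons.prems by auto
  finally show ?case by simp
qed simp

lemma wequiv_D_power_Suc:
  assumes "D" and "valid V D Q a"
  shows "wequiv V E D Q (a @ (Dg, False) # D_power n) (a @ D_power (Suc n))"
proof (cases "even n")
  case False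
  then show ?thesis
    using rel_imp_wequiv[of V E D Q a "[(Dg, False), (Dg, False)]" "[]" "[]"]
      rel_square[of V D "walk Q a" Dg E] assms
    by (simp add: D_power_def)
qed (simp add: D_power_def)

lemma wequiv_normal_form:
  "valid V D Q w \<Longrightarrow> wequiv V E D Q w (sigma_word (sigma_letters w) @ D_power (D_count w))"
proof (induction w arbitrary: Q)
  case (Cons x w)
  obtain g b where x: "x = (g, b)" by force
  let ?nf = "sigma_word (sigma_letters w) @ D_power (D_count w)"
  have "wequiv V E D Q ((g, b) # w) ((g, b) # ?nf)"
    using wequiv_in_context[of V E D Q "[(g, b)]" _ _ "[]"] Cons x by auto
  also have "wequiv V E D Q \<dots> ((g, False) # ?nf)"
    using wequiv_letter_positive[of V D Q "[]"] wequiv_imp_same_walk[OF calculation] Cons.prems x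
    by simp
  finally have first: "wequiv V E D Q (x # w) ((g, False) # ?nf)" using x by simp
  show ?case
  proof (cases g)
    case Dg
    have D: "D" and valid: "valid V D Q ((Dg, False) # ?nf)"
      using Cons.prems x Dg wequiv_imp_same_walk[OF first Cons.prems] by auto
    from first have "wequiv V E D Q (x # w) ((Dg, False) # ?nf)" using Dg by simp
    also have "wequiv V E D Q \<dots> (sigma_word (sigma_letters w) @ (Dg, False) # D_power (D_count w))"
      using wequiv_D_past_sigma_word[OF D valid] by simp
    also have "wequiv V E D Q \<dots> (sigma_word (sigma_letters w) @ D_power (Suc (D_count w)))"
      by (rule wequiv_D_power_Suc[OF D]) (use valid in auto)
    finally show ?thesis using x Dg by simp
  qed (use first x in simp)
qed (simp add: D_power_def)

lemma wequiv_by_normal_form: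
  assumes "valid V D Q w" and "valid V D Q w'"
    and "wequiv V E D Q (sigma_word (sigma_letters w)) (sigma_word (sigma_letters w'))"
    and "even (D_count w) = even (D_count w')"
  shows "wequiv V E D Q w w'"
proof -
  have "wequiv V E D Q w (sigma_word (sigma_letters w) @ D_power (D_count w))"
    using wequiv_normal_form[OF assms(1)] .
  also have "wequiv V E D Q \<dots> (sigma_word (sigma_letters w') @ D_power (D_count w))"
    using wequiv_in_context[of V E D Q "[]" _ _ "D_power (D_count w)"] assms(3)
      wequiv_imp_same_walk[OF calculation assms(1)] by simp
  also have "D_power (D_count w) = D_power (D_count w')"
    using assms(4) by (simp add: D_power_def)
  also have "wequiv V E D Q (sigma_word (sigma_letters w') @ D_power (D_count w')) w'"
    using wequiv_sym[OF wequiv_normal_form[OF assms(2)]] .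
  finally show ?thesis .
qed

lemma set_sigma_letters_valid: "valid V D Q w \<Longrightarrow> set (sigma_letters w) \<subseteq> V"
  by (induction w arbitrary: Q rule: sigma_letters.induct) (force simp: is_source_def is_sink_def)+

lemma valid_concat_loops:
  "\<forall>g\<in>set ws. valid V D Q g \<and> walk Q g = Q \<Longrightarrow> valid V D Q (concat ws) \<and> walk Q (concat ws) = Q"
  by (induction ws) auto

lemma generates_autI:
  assumes loops: "\<forall>g\<in>set gs. valid V D Q g \<and> walk Q g = Q"
    and reach: "\<And>w. valid V D Q w \<Longrightarrow> walk Q w = Q \<Longrightarrow> \<exists>ws. set ws \<subseteq> set gs \<and>
        wequiv V E D Q (sigma_word (sigma_letters w)) (sigma_word (sigma_letters (concat ws))) \<and>
        even (D_count w) = even (D_count (concat ws))"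
  shows "generates_aut V E D Q gs"
  unfolding generates_aut_def
proof (intro conjI allI impI loops)
  fix w assume w: "valid V D Q w \<and> walk Q w = Q"
  then obtain ws where ws: "set ws \<subseteq> set gs"
    and same: "wequiv V E D Q (sigma_word (sigma_letters w)) (sigma_word (sigma_letters (concat ws)))"
      "even (D_count w) = even (D_count (concat ws))"
    using reach by blast
  have "valid V D Q (concat ws)"
    using valid_concat_loops[of ws] loops ws by blast
  then show "\<exists>ws. set ws \<subseteq> set gs \<union> inv_word ` set gs \<and> wequiv V E D Q w (concat ws)"
    using wequiv_by_normal_form[OF _ _ same] w ws by blast
qed

section \<open>Height functions\<close>

definition is_height :: "('v \<times> 'v) set \<Rightarrow> ('v \<Rightarrow> int) \<Rightarrow> bool" where
  "is_height E H \<longleftrightarrow> (\<forall>a b. (a, b) \<in> E \<longrightarrow> H a = H b + 1 \<or> H b = H a + 1)"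

definition orientation_of :: "('v \<times> 'v) set \<Rightarrow> ('v \<Rightarrow> int) \<Rightarrow> ('v \<times> 'v) set" where
  "orientation_of E H = {(a, b). (a, b) \<in> E \<and> H b = H a + 1}"

definition local_min :: "('v \<times> 'v) set \<Rightarrow> ('v \<Rightarrow> int) \<Rightarrow> 'v \<Rightarrow> bool" where
  "local_min E H i \<longleftrightarrow> (\<forall>j. (i, j) \<in> E \<longrightarrow> H j = H i + 1)"

definition local_max :: "('v \<times> 'v) set \<Rightarrow> ('v \<Rightarrow> int) \<Rightarrow> 'v \<Rightarrow> bool" where
  "local_max E H i \<longleftrightarrow> (\<forall>j. (i, j) \<in> E \<longrightarrow> H j = H i - 1)"

definition flippable :: "'v set \<Rightarrow> ('v \<times> 'v) set \<Rightarrow> ('v \<Rightarrow> int) \<Rightarrow> 'v \<Rightarrow> bool" where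
  "flippable V E H i \<longleftrightarrow> i \<in> V \<and> (local_min E H i \<or> local_max E H i)"

definition flip :: "('v \<times> 'v) set \<Rightarrow> 'v \<Rightarrow> ('v \<Rightarrow> int) \<Rightarrow> 'v \<Rightarrow> int" where
  "flip E i H = (if local_min E H i then H(i := H i + 2) else H(i := H i - 2))"

fun flips :: "('v \<times> 'v) set \<Rightarrow> ('v \<Rightarrow> int) \<Rightarrow> 'v list \<Rightarrow> 'v \<Rightarrow> int" where
  "flips E H [] = H"
| "flips E H (i # p) = flips E (flip E i H) p"

fun flip_path :: "'v set \<Rightarrow> ('v \<times> 'v) set \<Rightarrow> ('v \<Rightarrow> int) \<Rightarrow> 'v list \<Rightarrow> bool" where
  "flip_path V E H [] = True"
| "flip_path V E H (i # p) \<longleftrightarrow> flippable V E H i \<and> flip_path V E (flip E i H) p"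

definition congruent_height :: "'v set \<Rightarrow> ('v \<times> 'v) set \<Rightarrow> ('v \<Rightarrow> int) \<Rightarrow> ('v \<Rightarrow> int) \<Rightarrow> bool" where
  "congruent_height V E T H \<longleftrightarrow>
     is_height E H \<and> (\<forall>v. even (H v - T v)) \<and> (\<forall>v. v \<notin> V \<longrightarrow> H v = T v)"

lemma mem_orientation_of [simp]: "(a, b) \<in> orientation_of E H \<longleftrightarrow> (a, b) \<in> E \<and> H b = H a + 1"
  unfolding orientation_of_def by simp

lemma flips_append [simp]: "flips E H (xs @ ys) = flips E (flips E H xs) ys"
  by (induction xs arbitrary: H) auto

lemma flip_path_append [simp]:
  "flip_path V E H (xs @ ys) \<longleftrightarrow> flip_path V E H xs \<and> flip_path V E (flips E H xs) ys"
  by (induction xs arbitrary: H) auto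

lemma flip_other [simp]: "k \<noteq> i \<Longrightarrow> flip E i H k = H k"
  unfolding flip_def by auto

lemma flip_self: "flip E i H i = (if local_min E H i then H i + 2 else H i - 2)"
  unfolding flip_def by simp

lemma flip_at_edge:
  assumes "flippable V E H i" "(i, j) \<in> E"
  shows "flip E i H i = H i + 2 \<and> H j = H i + 1 \<or> flip E i H i = H i - 2 \<and> H j = H i - 1"
  using assms unfolding flippable_def flip_def local_min_def local_max_def by auto

lemma congruent_height_refl: "is_height E H \<Longrightarrow> congruent_height V E H H"
  unfolding congruent_height_def by simp

lemma congruent_height_sym:
  "is_height E T \<Longrightarrow> congruent_height V E T H \<Longrightarrow> congruent_height V E H T"
  unfolding congruent_height_def by (metis minus_diff_eq even_minus)

lemma congruent_height_trans:
  "congruent_height V E T H \<Longrightarrow> congruent_height V E H H' \<Longrightarrow> congruent_height V E T H'"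
  unfolding congruent_height_def by (metis diff_add_cancel add_diff_eq even_add)

lemma orientation_of_eq_imp_const_diff:
  assumes connected: "\<forall>u\<in>V. \<forall>v\<in>V. (u, v) \<in> E\<^sup>*"
    and "is_height E H" "is_height E H'" "orientation_of E H = orientation_of E H'"
    and "u \<in> V" "v \<in> V"
  shows "H u - H' u = H v - H' v"
proof -
  have edge: "H a - H' a = H b - H' b" if "(a, b) \<in> E" for a b
  proof -
    have "H b = H a + 1 \<longleftrightarrow> H' b = H' a + 1"
      using assms(4) that by (metis mem_orientation_of)
    then show ?thesis
      using assms(2,3) that unfolding is_height_def by force
  qed
  from connected \<open>u \<in> V\<close> \<open>v \<in> V\<close> have "(u, v) \<in> E\<^sup>*" by blast
  then show ?thesis
    by (induction rule: rtrancl_induct) (simp_all add: edge)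
qed

locale graph_without_isolated =
  fixes V :: "'v set" and E :: "('v \<times> 'v) set"
  assumes simple_graph: "simple_graph V E"
    and not_isolated: "\<And>v. v \<in> V \<Longrightarrow> \<exists>u. (v, u) \<in> E"
begin

lemma finite_V: "finite V"
  and edge_in_V: "(a, b) \<in> E \<Longrightarrow> a \<in> V \<and> b \<in> V"
  and edge_sym: "(a, b) \<in> E \<Longrightarrow> (b, a) \<in> E"
  and edge_irrefl: "(a, a) \<notin> E"
  using simple_graph unfolding simple_graph_def by (auto dest: symD)

lemma is_height_flip:
  assumes "is_height E H" "flippable V E H i"
  shows "is_height E (flip E i H)"
  unfolding is_height_def
proof (intro allI impI)
  fix a b assume ab: "(a, b) \<in> E"
  then have "a \<noteq> b" using edge_irrefl by auto
  consider "a = i" | "b = i" | "a \<noteq> i" "b \<noteq> i" by blast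
  then show "flip E i H a = flip E i H b + 1 \<or> flip E i H b = flip E i H a + 1"
  proof cases
    case 1
    with flip_at_edge[OF assms(2), of b] ab \<open>a \<noteq> b\<close> show ?thesis by auto
  next
    case 2
    with flip_at_edge[OF assms(2), of a] edge_sym[OF ab] \<open>a \<noteq> b\<close> show ?thesis by auto
  next
    case 3
    with assms(1) ab show ?thesis unfolding is_height_def by simp
  qed
qed

lemma is_source_orientation_of:
  assumes "is_height E H"
  shows "is_source V (orientation_of E H) i \<longleftrightarrow> i \<in> V \<and> local_min E H i"
proof -
  have "(\<forall>a. (a, i) \<notin> orientation_of E H) \<longleftrightarrow> local_min E H i"
  proof
    assume none: "\<forall>a. (a, i) \<notin> orientation_of E H"
    show "local_min E H i"
      unfolding local_min_def
    proof (intro allI impI)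
      fix j assume "(i, j) \<in> E"
      with none edge_sym[of i j] assms show "H j = H i + 1" unfolding is_height_def by auto
    qed
  next
    assume min: "local_min E H i"
    show "\<forall>a. (a, i) \<notin> orientation_of E H"
    proof (intro allI notI)
      fix a assume "(a, i) \<in> orientation_of E H"
      with min edge_sym[of a i] show False unfolding local_min_def by fastforce
    qed
  qed
  then show ?thesis unfolding is_source_def by blast
qed

lemma is_sink_orientation_of:
  assumes "is_height E H"
  shows "is_sink V (orientation_of E H) i \<longleftrightarrow> i \<in> V \<and> local_max E H i"
proof -
  have "(\<forall>b. (i, b) \<notin> orientation_of E H) \<longleftrightarrow> local_max E H i"
  proof
    assume none: "\<forall>b. (i, b) \<notin> orientation_of E H"
    show "local_max E H i"
      unfolding local_max_def
    proof (intro allI impI)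
      fix j assume "(i, j) \<in> E"
      with none assms show "H j = H i - 1" unfolding is_height_def by fastforce
    qed
  qed (auto simp: local_max_def)
  then show ?thesis unfolding is_sink_def by blast
qed

lemma gen_ok_orientation_of:
  "is_height E H \<Longrightarrow> gen_ok V D (orientation_of E H) (Sg i) \<longleftrightarrow> flippable V E H i"
  using is_source_orientation_of is_sink_orientation_of unfolding flippable_def by auto

lemma refl_at_orientation_of:
  assumes "flippable V E H i"
  shows "refl_at i (orientation_of E H) = orientation_of E (flip E i H)"
proof -
  have at_i: "((i, b) \<in> refl_at i (orientation_of E H) \<longleftrightarrow> (i, b) \<in> orientation_of E (flip E i H)) \<and>
      ((b, i) \<in> refl_at i (orientation_of E H) \<longleftrightarrow> (b, i) \<in> orientation_of E (flip E i H))" for b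
  proof (cases "(i, b) \<in> E")
    case True
    then have "b \<noteq> i" "(b, i) \<in> E" using edge_irrefl edge_sym by auto
    with True flip_at_edge[OF assms True] show ?thesis
      by (elim disjE) (simp_all add: mem_refl_at)
  next
    case False
    then have "(b, i) \<notin> E" using edge_sym by blast
    with False show ?thesis by (simp add: mem_refl_at)
  qed
  show ?thesis
  proof (rule set_eqI, clarify)
    fix a b
    show "(a, b) \<in> refl_at i (orientation_of E H) \<longleftrightarrow> (a, b) \<in> orientation_of E (flip E i H)"
      using at_i[of b] at_i[of a] by (cases "a = i \<or> b = i") (auto simp: mem_refl_at)
  qed
qed

lemma valid_sigma_word_iff_flip_path:
  assumes "is_height E H"
  shows "valid V D (orientation_of E H) (sigma_word p) \<longleftrightarrow> flip_path V E H p"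
  using assms
proof (induction p arbitrary: H)
  case (Cons i p)
  show ?case
  proof (cases "flippable V E H i")
    case True
    then show ?thesis
      using Cons.IH[OF is_height_flip[OF Cons.prems True]] gen_ok_orientation_of[OF Cons.prems]
        refl_at_orientation_of[OF True] by simp
  qed (use gen_ok_orientation_of[OF Cons.prems] in simp)
qed simp

lemma walk_sigma_word:
  assumes "is_height E H" "flip_path V E H p"
  shows "walk (orientation_of E H) (sigma_word p) = orientation_of E (flips E H p)"
  using assms
  by (induction p arbitrary: H) (auto simp: refl_at_orientation_of is_height_flip)

lemma congruent_height_flips:
  assumes "is_height E H" "flip_path V E H p"
  shows "congruent_height V E H (flips E H p)"
  using assms
proof (induction p arbitrary: H)
  case (Cons i p)
  then have i: "flippable V E H i" "i \<in> V" by (auto simp: flippable_def)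
  have "congruent_height V E (flip E i H) (flips E (flip E i H) p)"
    using Cons is_height_flip[OF Cons.prems(1) i(1)] by simp
  moreover have "even (flip E i H v - H v)" and "v \<notin> V \<Longrightarrow> flip E i H v = H v" for v
    using i(2) by (cases "v = i"; simp add: flip_self)+
  ultimately show ?case
    unfolding congruent_height_def by (metis flips.simps(2) diff_add_cancel even_add)
qed (simp add: congruent_height_refl)

lemma flip_path_sigma_letters:
  assumes "is_height E H" "valid V D (orientation_of E H) w"
  shows "flip_path V E H (sigma_letters w)"
  using wequiv_imp_same_walk[OF wequiv_normal_form[OF assms(2)] assms(2)]
    valid_sigma_word_iff_flip_path[OF assms(1)] by simp

lemma local_max_not_local_min: "i \<in> V \<Longrightarrow> local_max E H i \<Longrightarrow> \<not> local_min E H i"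
  using not_isolated unfolding local_min_def local_max_def by force

lemma flip_flip:
  assumes "flippable V E H i"
  shows "flippable V E (flip E i H) i \<and> flip E i (flip E i H) = H"
proof -
  obtain j where ij: "(i, j) \<in> E" using assms not_isolated unfolding flippable_def by blast
  have nbrs: "flip E i H k = H k" if "(i, k) \<in> E" for k
    using that edge_irrefl by (metis flip_other)
  show ?thesis
  proof (cases "local_min E H i")
    case True
    then have "flip E i H i = H i + 2" by (simp add: flip_self)
    with True have "local_max E (flip E i H) i" "\<not> local_min E (flip E i H) i"
      using ij nbrs unfolding local_min_def local_max_def by auto
    with assms True show ?thesis unfolding flippable_def by (auto simp: flip_def fun_eq_iff)
  next
    case False
    then have "local_max E H i" "flip E i H i = H i - 2"
      using assms unfolding flippable_def by (simp_all add: flip_self)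
    then have "local_min E (flip E i H) i"
      using nbrs unfolding local_min_def local_max_def by auto
    with assms False show ?thesis unfolding flippable_def by (auto simp: flip_def fun_eq_iff)
  qed
qed

lemma local_min_flip_nonadjacent: "i \<noteq> j \<Longrightarrow> (j, i) \<notin> E \<Longrightarrow> local_min E (flip E i H) j = local_min E H j"
  and local_max_flip_nonadjacent: "i \<noteq> j \<Longrightarrow> (j, i) \<notin> E \<Longrightarrow> local_max E (flip E i H) j = local_max E H j"
  unfolding local_min_def local_max_def by (metis flip_other)+

lemma flippable_flip_nonadjacent:
  "i \<noteq> j \<Longrightarrow> (j, i) \<notin> E \<Longrightarrow> flippable V E (flip E i H) j = flippable V E H j"
  unfolding flippable_def using local_min_flip_nonadjacent local_max_flip_nonadjacent by simp

lemma flip_commute: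
  assumes "i \<noteq> j" "(i, j) \<notin> E"
  shows "flip E j (flip E i H) = flip E i (flip E j H)"
proof -
  have "(j, i) \<notin> E" using assms(2) edge_sym by blast
  then show ?thesis
    using assms local_min_flip_nonadjacent[of i j H] local_min_flip_nonadjacent[of j i H]
    unfolding flip_def by (auto simp: fun_upd_twist)
qed

lemma flip_uniform_neighbours:
  assumes "i \<in> V" "H i = a" "\<forall>j. (i, j) \<in> E \<longrightarrow> H j = b" "b = a + 1 \<or> b = a - 1"
  shows "flippable V E H i \<and> flip E i H = H(i := 2 * b - a)"
proof -
  obtain j where "(i, j) \<in> E" using not_isolated assms(1) by blast
  with assms show ?thesis
    unfolding flippable_def flip_def local_min_def local_max_def by force
qed

lemma flips_independent_level_set:
  assumes "distinct xs" "set xs \<subseteq> V" "\<forall>i\<in>set xs. H i = a"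
    and "\<forall>i\<in>set xs. \<forall>j. (i, j) \<in> E \<longrightarrow> j \<notin> set xs \<and> H j = b" "b = a + 1 \<or> b = a - 1"
  shows "flip_path V E H xs \<and> flips E H xs = (\<lambda>v. if v \<in> set xs then 2 * b - a else H v)"
  using assms(1-4)
proof (induction xs arbitrary: H)
  case (Cons i xs)
  have flip_i: "flippable V E H i \<and> flip E i H = H(i := 2 * b - a)"
    using flip_uniform_neighbours[of i H a b] Cons.prems assms(5) by simp
  have IH: "flip_path V E (H(i := 2 * b - a)) xs \<and>
      flips E (H(i := 2 * b - a)) xs = (\<lambda>v. if v \<in> set xs then 2 * b - a else (H(i := 2 * b - a)) v)"
    using Cons.prems by (intro Cons.IH) auto
  from flip_i have "flip E i H = H(i := 2 * b - a)" by blast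
  with flip_i IH show ?case
    unfolding flip_path.simps flips.simps by simp (auto simp: fun_eq_iff)
qed simp

lemma wequiv_Cons_flip:
  assumes "is_height E H" "flip_path V E H (i # p)"
    and "wequiv V E D (orientation_of E (flip E i H)) (sigma_word p) (sigma_word q)"
  shows "wequiv V E D (orientation_of E H) (sigma_word (i # p)) (sigma_word (i # q))"
proof -
  have "flippable V E H i" using assms(2) by simp
  moreover have "valid V D (orientation_of E H) (sigma_word (i # p))"
    using valid_sigma_word_iff_flip_path[OF assms(1)] assms(2) by blast
  ultimately show ?thesis
    using wequiv_in_context[of V E D "orientation_of E H" "[(Sg i, False)]" "sigma_word p" "sigma_word q" "[]"]
      assms(3) refl_at_orientation_of by simp
qed

lemma wequiv_flip_twice:
  assumes "is_height E H" "flippable V E H i" "flip_path V E H p"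
  shows "wequiv V E D (orientation_of E H) (sigma_word (i # i # p)) (sigma_word p)"
proof -
  have "flip_path V E H (i # i # p)" using flip_flip[OF assms(2)] assms(2,3) by simp
  then have "valid V D (orientation_of E H) ([] @ [(Sg i, False), (Sg i, False)] @ sigma_word p)"
    using valid_sigma_word_iff_flip_path[OF assms(1)] by (metis sigma_word_simps(2) append_Cons append_Nil)
  moreover have "rel V E D (walk (orientation_of E H) []) [(Sg i, False), (Sg i, False)] []"
    using rel_square[of V D "orientation_of E H" "Sg i" E] gen_ok_orientation_of[OF assms(1), of D i]
      assms(2) by simp
  ultimately show ?thesis
    using rel_imp_wequiv by fastforce
qed

lemma wequiv_flip_swap:
  assumes "is_height E H" "flip_path V E H (i # j # p)" "flip_path V E H (j # i # p)" "(i, j) \<notin> E"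
  shows "wequiv V E D (orientation_of E H) (sigma_word (i # j # p)) (sigma_word (j # i # p))"
proof -
  have "(j, i) \<notin> E" using assms(4) edge_sym by blast
  moreover have "valid V D (orientation_of E H) ([(Sg i, False), (Sg j, False)] @ sigma_word p)"
    and "valid V D (orientation_of E H) ([(Sg j, False), (Sg i, False)] @ sigma_word p)"
    using valid_sigma_word_iff_flip_path[OF assms(1)] assms(2,3) by (metis sigma_word_simps(2) append_Cons append_Nil)+
  ultimately show ?thesis
    using rel_imp_wequiv[OF rel_Sigma_commute, of j i _ V D _ "[]" "sigma_word p"] by simp
qed

end

section \<open>Flip paths with common endpoints\<close>

locale height_target = graph_without_isolated +
  fixes T :: "'v \<Rightarrow> int"
  assumes is_height_T: "is_height E T"
begin

abbreviation admissible :: "('v \<Rightarrow> int) \<Rightarrow> bool" where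
  "admissible \<equiv> congruent_height V E T"

definition potential :: "('v \<Rightarrow> int) \<Rightarrow> int" where
  "potential H = (\<Sum>v\<in>V. \<bar>H v - T v\<bar>)"

definition descends :: "('v \<Rightarrow> int) \<Rightarrow> 'v \<Rightarrow> bool" where
  "descends H i \<longleftrightarrow> (if local_min E H i then H i < T i else T i < H i)"

definition geodesic :: "('v \<Rightarrow> int) \<Rightarrow> 'v list \<Rightarrow> bool" where
  "geodesic H p \<longleftrightarrow> flip_path V E H p \<and> flips E H p = T \<and> 2 * int (length p) = potential H"

lemma admissible_flips: "admissible H \<Longrightarrow> flip_path V E H p \<Longrightarrow> admissible (flips E H p)"
  by (metis congruent_height_def congruent_height_flips congruent_height_trans)

lemma admissible_flip: "admissible H \<Longrightarrow> flippable V E H i \<Longrightarrow> admissible (flip E i H)"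
  using admissible_flips[of H "[i]"] by simp

lemma admissible_gap:
  assumes "admissible H" "H v \<noteq> T v"
  shows "2 \<le> \<bar>H v - T v\<bar>"
proof -
  obtain k where "H v - T v = 2 * k"
    using assms(1) unfolding congruent_height_def by (meson evenE)
  with assms(2) show ?thesis by arith
qed

lemma potential_nonneg: "0 \<le> potential H"
  unfolding potential_def by (simp add: sum_nonneg)

lemma potential_T [simp]: "potential T = 0"
  unfolding potential_def by simp

lemma potential_flip:
  assumes "admissible H" "flippable V E H i"
  shows "potential (flip E i H) = (if descends H i then potential H - 2 else potential H + 2)"
proof -
  have i: "i \<in> V" using assms(2) unfolding flippable_def by simp
  have "\<bar>flip E i H i - T i\<bar> = (if descends H i then \<bar>H i - T i\<bar> - 2 else \<bar>H i - T i\<bar> + 2)"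
    using admissible_gap[OF assms(1), of i] unfolding flip_self descends_def by auto
  moreover have "potential G = \<bar>G i - T i\<bar> + (\<Sum>v\<in>V - {i}. \<bar>G v - T v\<bar>)" for G
    unfolding potential_def using sum.remove[OF finite_V i] by blast
  moreover have "(\<Sum>v\<in>V - {i}. \<bar>flip E i H v - T v\<bar>) = (\<Sum>v\<in>V - {i}. \<bar>H v - T v\<bar>)"
    by (rule sum.cong) auto
  ultimately show ?thesis by simp
qed

lemma potential_le_length:
  "admissible H \<Longrightarrow> flip_path V E H p \<Longrightarrow> flips E H p = T \<Longrightarrow> potential H \<le> 2 * int (length p)"
proof (induction p arbitrary: H)
  case (Cons i p)
  then have "potential (flip E i H) \<le> 2 * int (length p)"
    using admissible_flip by simp
  then show ?case using potential_flip[of H i] Cons.prems by (simp split: if_splits)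
qed simp

lemma exists_ascent:
  assumes "admissible H" "v \<in> V" "H v < T v"
  shows "\<exists>i\<in>V. local_min E H i \<and> H i < T i"
proof -
  let ?S = "{v \<in> V. H v < T v}"
  obtain m where m: "m \<in> ?S" "H m = Min (H ` ?S)"
    using Min_in[of "H ` ?S"] finite_V assms(2,3) by fastforce
  have "H u = H m + 1" if "(m, u) \<in> E" for u
  proof (rule ccontr)
    assume "H u \<noteq> H m + 1"
    then have "H u = H m - 1" using assms(1) that unfolding congruent_height_def is_height_def by force
    moreover have "T u \<ge> T m - 1" using is_height_T that unfolding is_height_def by force
    moreover have "T m \<ge> H m + 2" using admissible_gap[OF assms(1), of m] m(1) by simp
    ultimately have "u \<in> ?S" using that edge_in_V by auto
    then have "H m \<le> H u" using m(2) finite_V by simp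
    with \<open>H u = H m - 1\<close> show False by simp
  qed
  then show ?thesis using m(1) unfolding local_min_def by blast
qed

lemma exists_fall:
  assumes "admissible H" "v \<in> V" "T v < H v"
  shows "\<exists>i\<in>V. local_max E H i \<and> T i < H i"
proof -
  let ?S = "{v \<in> V. T v < H v}"
  obtain m where m: "m \<in> ?S" "H m = Max (H ` ?S)"
    using Max_in[of "H ` ?S"] finite_V assms(2,3) by fastforce
  have "H u = H m - 1" if "(m, u) \<in> E" for u
  proof (rule ccontr)
    assume "H u \<noteq> H m - 1"
    then have "H u = H m + 1" using assms(1) that unfolding congruent_height_def is_height_def by force
    moreover have "T u \<le> T m + 1" using is_height_T that unfolding is_height_def by force
    moreover have "H m \<ge> T m + 2" using admissible_gap[OF assms(1), of m] m(1) by simp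
    ultimately have "u \<in> ?S" using that edge_in_V by auto
    then have "H u \<le> H m" using m(2) finite_V by simp
    with \<open>H u = H m + 1\<close> show False by simp
  qed
  then show ?thesis using m(1) unfolding local_max_def by blast
qed

lemma exists_descent:
  assumes "admissible H" "H \<noteq> T"
  shows "\<exists>i. flippable V E H i \<and> descends H i"
proof -
  obtain v where "H v \<noteq> T v" using assms(2) by blast
  moreover have "v \<in> V" using assms(1) calculation unfolding congruent_height_def by blast
  ultimately consider "H v < T v" | "T v < H v" by linarith
  then show ?thesis
  proof cases
    case 1
    then show ?thesis using exists_ascent[OF assms(1) \<open>v \<in> V\<close>]
      unfolding flippable_def descends_def by auto
  next
    case 2
    then show ?thesis using exists_fall[OF assms(1) \<open>v \<in> V\<close>] local_max_not_local_min
      unfolding flippable_def descends_def by fastforce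
  qed
qed

lemma descents_nonadjacent:
  assumes "admissible H" "flippable V E H i" "flippable V E H j" "descends H i" "descends H j"
  shows "(i, j) \<notin> E"
proof
  assume ij: "(i, j) \<in> E"
  then have ji: "(j, i) \<in> E" and T: "\<bar>T i - T j\<bar> = 1"
    using edge_sym is_height_T unfolding is_height_def by force+
  have gap: "2 \<le> \<bar>H i - T i\<bar>" "2 \<le> \<bar>H j - T j\<bar>"
    using assms(4,5) admissible_gap[OF assms(1)] unfolding descends_def by (metis less_irrefl)+
  show False
  proof (cases "local_min E H i")
    case True
    then have "H j = H i + 1" using ij unfolding local_min_def by blast
    then have "\<not> local_min E H j" using ji unfolding local_min_def by force
    with True assms(4,5) gap T \<open>H j = H i + 1\<close> show False unfolding descends_def by simp
  next
    case False
    then have "H j = H i - 1" using ij assms(2) unfolding flippable_def local_max_def by blast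
    then have "local_min E H j" using ji assms(3) unfolding flippable_def local_max_def by force
    with False assms(4,5) gap T \<open>H j = H i - 1\<close> show False unfolding descends_def by simp
  qed
qed

lemma descends_flip_nonadjacent: "i \<noteq> j \<Longrightarrow> (j, i) \<notin> E \<Longrightarrow> descends (flip E i H) j = descends H j"
  unfolding descends_def using local_min_flip_nonadjacent by simp

lemma geodesic_Cons:
  assumes "admissible H" "flippable V E H i" "descends H i" "geodesic (flip E i H) p"
  shows "geodesic H (i # p)"
  using assms potential_flip[OF assms(1,2)] unfolding geodesic_def by auto

lemma geodesic_ConsD:
  assumes "admissible H" "geodesic H (i # p)"
  shows "flippable V E H i \<and> descends H i \<and> geodesic (flip E i H) p"
proof -
  have i: "flippable V E H i" and p: "flip_path V E (flip E i H) p" "flips E (flip E i H) p = T"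
    and length: "2 * int (length p) + 2 = potential H"
    using assms(2) unfolding geodesic_def by auto
  have "potential (flip E i H) \<le> 2 * int (length p)"
    using potential_le_length[OF admissible_flip[OF assms(1) i] p] .
  then have "descends H i"
    using potential_flip[OF assms(1) i] length by (auto split: if_splits)
  then show ?thesis
    using i p length potential_flip[OF assms(1) i] unfolding geodesic_def by simp
qed

lemma geodesic_exists: "admissible H \<Longrightarrow> \<exists>p. geodesic H p"
proof (induction "nat (potential H)" arbitrary: H rule: less_induct)
  case less
  show ?case
  proof (cases "H = T")
    case True
    then have "geodesic H []" unfolding geodesic_def by simp
    then show ?thesis by blast
  next
    case False
    then obtain i where i: "flippable V E H i" "descends H i"
      using exists_descent[OF less.prems] by blast
    then have "nat (potential (flip E i H)) < nat (potential H)"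
      using potential_flip[OF less.prems i(1)] potential_nonneg[of "flip E i H"] by simp
    then obtain p where "geodesic (flip E i H) p"
      using less.hyps admissible_flip[OF less.prems i(1)] by blast
    then show ?thesis using geodesic_Cons[OF less.prems i] by blast
  qed
qed

lemma geodesic_diamond:
  assumes "admissible H" "flippable V E H x" "descends H x" "flippable V E H y" "descends H y" "x \<noteq> y"
  obtains g where "geodesic (flip E x H) (y # g)" "geodesic (flip E y H) (x # g)"
    and "wequiv V E D (orientation_of E H) (sigma_word (x # y # g)) (sigma_word (y # x # g))"
proof -
  \<comment> \<open>two descents are never adjacent, so they commute and (R2) applies\<close>
  have xy: "(x, y) \<notin> E" "(y, x) \<notin> E"
    using descents_nonadjacent[OF assms(1)] assms(2-5) by blast+
  have adm: "admissible (flip E x H)" "admissible (flip E y H)"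
    using admissible_flip[OF assms(1)] assms(2,4) by blast+
  have x_then_y: "flippable V E (flip E x H) y" "descends (flip E x H) y"
    and y_then_x: "flippable V E (flip E y H) x" "descends (flip E y H) x"
    using flippable_flip_nonadjacent descends_flip_nonadjacent assms(2-6) xy by metis+
  obtain g where g: "geodesic (flip E y (flip E x H)) g"
    using geodesic_exists admissible_flip[OF adm(1) x_then_y(1)] by blast
  have xyg: "geodesic (flip E x H) (y # g)" and yxg: "geodesic (flip E y H) (x # g)"
    using geodesic_Cons[OF adm(1) x_then_y] geodesic_Cons[OF adm(2) y_then_x] g
      flip_commute[OF assms(6) xy(1)] by simp_all
  moreover have "wequiv V E D (orientation_of E H) (sigma_word (x # y # g)) (sigma_word (y # x # g))"
    using wequiv_flip_swap[OF _ _ _ xy(1)] assms(1,2,4) xyg yxg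
    unfolding geodesic_def congruent_height_def by simp
  ultimately show ?thesis by (rule that)
qed

lemma geodesics_wequiv:
  assumes "admissible H" "geodesic H p" "geodesic H q"
  shows "wequiv V E D (orientation_of E H) (sigma_word p) (sigma_word q)"
  using assms
proof (induction "nat (potential H)" arbitrary: H p q rule: less_induct)
  case less
  have H: "is_height E H" using less.prems(1) unfolding congruent_height_def by simp
  show ?case
  proof (cases p)
    case Nil
    then have "q = []" using less.prems(2,3) unfolding geodesic_def by simp
    with Nil show ?thesis by simp
  next
    case (Cons x p')
    then obtain y q' where q: "q = y # q'" using less.prems(2,3) unfolding geodesic_def by (cases q) auto
    have x: "flippable V E H x" "descends H x" "geodesic (flip E x H) p'"
      and y: "flippable V E H y" "descends H y" "geodesic (flip E y H) q'"
      using geodesic_ConsD[OF less.prems(1)] less.prems(2,3) Cons q by blast+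
    have adm: "admissible (flip E x H)" "admissible (flip E y H)"
      using admissible_flip[OF less.prems(1)] x(1) y(1) by blast+
    have smaller: "nat (potential (flip E x H)) < nat (potential H)"
      "nat (potential (flip E y H)) < nat (potential H)"
      using potential_flip[OF less.prems(1)] potential_nonneg[of "flip E x H"]
        potential_nonneg[of "flip E y H"] x(1,2) y(1,2) by simp_all
    have paths: "flip_path V E H (x # p')" "flip_path V E H (y # q')"
      using less.prems(2,3) Cons q unfolding geodesic_def by simp_all
    show ?thesis
    proof (cases "x = y")
      case True
      then show ?thesis
        using less.hyps[OF smaller(1) adm(1) x(3)] y(3) wequiv_Cons_flip[OF H paths(1)] Cons q by simp
    next
      case False
      then obtain g where xyg: "geodesic (flip E x H) (y # g)" and yxg: "geodesic (flip E y H) (x # g)"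
        and swap: "wequiv V E D (orientation_of E H) (sigma_word (x # y # g)) (sigma_word (y # x # g))"
        using geodesic_diamond[OF less.prems(1) x(1,2) y(1,2)] by blast
      have "wequiv V E D (orientation_of E H) (sigma_word (x # p')) (sigma_word (x # y # g))"
        using wequiv_Cons_flip[OF H paths(1) less.hyps[OF smaller(1) adm(1) x(3) xyg]] .
      also note swap
      also have "wequiv V E D (orientation_of E H) (sigma_word (y # x # g)) (sigma_word (y # q'))"
        using wequiv_sym[OF wequiv_Cons_flip[OF H paths(2) less.hyps[OF smaller(2) adm(2) y(3) yxg]]] .
      finally show ?thesis using Cons q by simp
    qed
  qed
qed

lemma flip_path_wequiv_geodesic:
  assumes "admissible H" "flip_path V E H p" "flips E H p = T" "geodesic H g"
  shows "wequiv V E D (orientation_of E H) (sigma_word p) (sigma_word g)"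
  using assms
proof (induction p arbitrary: H g)
  case Nil
  then have "g = []" unfolding geodesic_def by simp
  then show ?case by simp
next
  case (Cons x p)
  have H: "is_height E H" using Cons.prems(1) unfolding congruent_height_def by simp
  have x: "flippable V E H x" and p: "flip_path V E (flip E x H) p" "flips E (flip E x H) p = T"
    using Cons.prems(2,3) by auto
  have adm: "admissible (flip E x H)" using admissible_flip[OF Cons.prems(1) x] .
  show ?case
  proof (cases "descends H x")
    case True
    obtain g' where g': "geodesic (flip E x H) g'" using geodesic_exists[OF adm] by blast
    have "wequiv V E D (orientation_of E H) (sigma_word (x # p)) (sigma_word (x # g'))"
      using wequiv_Cons_flip[OF H Cons.prems(2) Cons.IH[OF adm p g']] .
    also have "wequiv V E D (orientation_of E H) \<dots> (sigma_word g)"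
      using geodesics_wequiv[OF Cons.prems(1) geodesic_Cons[OF Cons.prems(1) x True g'] Cons.prems(4)] .
    finally show ?thesis .
  next
    case False
    \<comment> \<open>then flipping \<open>x\<close> back descends, so \<open>x # g\<close> is a geodesic from \<open>flip E x H\<close>\<close>
    have flip_back: "flippable V E (flip E x H) x" "flip E x (flip E x H) = H"
      using flip_flip[OF x] by auto
    then have "descends (flip E x H) x"
      using potential_flip[OF Cons.prems(1) x] potential_flip[OF adm flip_back(1)] False
      by (auto split: if_splits)
    then have "geodesic (flip E x H) (x # g)"
      using geodesic_Cons[OF adm flip_back(1)] flip_back(2) Cons.prems(4) by simp
    then have "wequiv V E D (orientation_of E H) (sigma_word (x # p)) (sigma_word (x # x # g))"
      using wequiv_Cons_flip[OF H Cons.prems(2) Cons.IH[OF adm p]] by blast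
    also have "wequiv V E D (orientation_of E H) \<dots> (sigma_word g)"
      using wequiv_flip_twice[OF H x] Cons.prems(4) unfolding geodesic_def by blast
    finally show ?thesis .
  qed
qed

lemma flip_paths_to_target_wequiv:
  assumes "admissible H" "flip_path V E H p" "flips E H p = T" "flip_path V E H q" "flips E H q = T"
  shows "wequiv V E D (orientation_of E H) (sigma_word p) (sigma_word q)"
proof -
  obtain g where "geodesic H g" using geodesic_exists[OF assms(1)] by blast
  then show ?thesis
    using flip_path_wequiv_geodesic assms wequiv_sym wequiv_trans by metis
qed

end

context graph_without_isolated
begin

theorem wequiv_if_same_flips:
  assumes "is_height E H" "flip_path V E H p" "flip_path V E H q" "flips E H p = flips E H q"
  shows "wequiv V E D (orientation_of E H) (sigma_word p) (sigma_word q)"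
proof -
  have congruent: "congruent_height V E H (flips E H p)"
    using congruent_height_flips[OF assms(1,2)] .
  interpret height_target V E "flips E H p"
    using congruent unfolding congruent_height_def by unfold_locales simp
  show ?thesis
    using flip_paths_to_target_wequiv congruent_height_sym[OF assms(1) congruent] assms by simp
qed

end

section \<open>Loops at the alternating orientation\<close>

definition signed_replicate :: "int \<Rightarrow> 'a \<Rightarrow> 'a \<Rightarrow> 'a list" where
  "signed_replicate k x y = (if 0 \<le> k then replicate (nat k) x else replicate (nat (- k)) y)"

lemma map_signed_replicate [simp]: "map f (signed_replicate k x y) = signed_replicate k (f x) (f y)"
  unfolding signed_replicate_def by simp

lemma concat_concat: "concat (concat xss) = concat (map concat xss)"
  by (induction xss) auto

lemma set_signed_replicate: "set (signed_replicate k x y) \<subseteq> {x, y}"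
  unfolding signed_replicate_def by auto

lemma D_count_concat_replicate: "D_count (concat (replicate n u)) = n * D_count u"
  by (induction n) auto

lemma even_D_count_concat_signed_replicate:
  "even (D_count u) \<Longrightarrow> even (D_count v) \<Longrightarrow> even (D_count (concat (signed_replicate k u v)))"
  unfolding signed_replicate_def by (simp add: D_count_concat_replicate)

lemma flips_concat_replicate:
  assumes "\<And>m. flip_path V E (f m) xs \<and> flips E (f m) xs = f (m + d)"
  shows "flip_path V E (f m) (concat (replicate n xs)) \<and>
    flips E (f m) (concat (replicate n xs)) = f (m + int n * d)"
proof (induction n arbitrary: m)
  case (Suc n)
  then show ?case using assms[of m] Suc.IH[of "m + d"] by (simp add: algebra_simps)
qed simp

locale connected_bipartite = graph_without_isolated +
  fixes P N :: "'v set" and ps ns :: "'v list"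
  assumes V_eq: "V = P \<union> N" and disjoint: "P \<inter> N = {}"
    and P_independent: "\<forall>a\<in>P. \<forall>b\<in>P. (a, b) \<notin> E"
    and N_independent: "\<forall>a\<in>N. \<forall>b\<in>N. (a, b) \<notin> E"
    and ps: "set ps = P" "distinct ps" and ns: "set ns = N" "distinct ns"
    and connected: "\<forall>u\<in>V. \<forall>v\<in>V. (u, v) \<in> E\<^sup>*" and nonempty: "V \<noteq> {}"
begin

definition alternating :: "('v \<times> 'v) set" where
  "alternating = {(a, b). (a, b) \<in> E \<and> a \<in> P}"

definition level :: "int \<Rightarrow> int \<Rightarrow> 'v \<Rightarrow> int" where
  "level a b v = (if v \<in> P then a else if v \<in> N then b else 0)"

definition shift_path :: "int \<Rightarrow> 'v list" where
  "shift_path k = concat (signed_replicate k (ps @ ns) (ns @ ps))"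

lemma edge_cases: "(x, y) \<in> E \<Longrightarrow> x \<in> P \<and> y \<in> N \<or> x \<in> N \<and> y \<in> P"
  using edge_in_V V_eq P_independent N_independent by blast

lemma level_P [simp]: "x \<in> P \<Longrightarrow> level a b x = a"
  and level_N [simp]: "x \<in> N \<Longrightarrow> level a b x = b"
  and level_outside [simp]: "x \<notin> V \<Longrightarrow> level a b x = 0"
  unfolding level_def using disjoint V_eq by auto

lemma is_height_level: "b = a + 1 \<or> b = a - 1 \<Longrightarrow> is_height E (level a b)"
  unfolding is_height_def using edge_cases disjoint by fastforce

lemma orientation_of_level_up: "orientation_of E (level a (a + 1)) = alternating"
  unfolding alternating_def using edge_cases disjoint by fastforce

lemma orientation_of_level_down: "orientation_of E (level a (a - 1)) = alternating\<inverse>"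
proof (rule set_eqI, clarify)
  fix x y
  show "(x, y) \<in> orientation_of E (level a (a - 1)) \<longleftrightarrow> (x, y) \<in> alternating\<inverse>"
    using edge_cases[of x y] edge_sym[of x y] edge_sym[of y x] disjoint
    unfolding alternating_def by auto
qed

lemma flips_ps:
  assumes "b = a + 1 \<or> b = a - 1"
  shows "flip_path V E (level a b) ps \<and> flips E (level a b) ps = level (2 * b - a) b"
proof -
  have "flip_path V E (level a b) ps \<and>
      flips E (level a b) ps = (\<lambda>v. if v \<in> set ps then 2 * b - a else level a b v)"
  proof (rule flips_independent_level_set[OF ps(2) _ _ _ assms])
    show "set ps \<subseteq> V" "\<forall>i\<in>set ps. level a b i = a"
      using ps(1) V_eq by auto
    show "\<forall>i\<in>set ps. \<forall>j. (i, j) \<in> E \<longrightarrow> j \<notin> set ps \<and> level a b j = b"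
    proof (intro ballI allI impI)
      fix i j assume "i \<in> set ps" "(i, j) \<in> E"
      then have "j \<in> N" using ps(1) edge_cases[of i j] disjoint by blast
      then show "j \<notin> set ps \<and> level a b j = b" using ps(1) disjoint by auto
    qed
  qed
  moreover have "(\<lambda>v. if v \<in> set ps then 2 * b - a else level a b v) = level (2 * b - a) b"
    unfolding ps(1) level_def by (simp add: fun_eq_iff)
  ultimately show ?thesis by simp
qed

lemma flips_ns:
  assumes "b = a + 1 \<or> b = a - 1"
  shows "flip_path V E (level a b) ns \<and> flips E (level a b) ns = level a (2 * a - b)"
proof -
  have "flip_path V E (level a b) ns \<and>
      flips E (level a b) ns = (\<lambda>v. if v \<in> set ns then 2 * a - b else level a b v)"
  proof (rule flips_independent_level_set[OF ns(2)])
    show "a = b + 1 \<or> a = b - 1" using assms by auto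
    show "set ns \<subseteq> V" "\<forall>i\<in>set ns. level a b i = b"
      using ns(1) V_eq by auto
    show "\<forall>i\<in>set ns. \<forall>j. (i, j) \<in> E \<longrightarrow> j \<notin> set ns \<and> level a b j = a"
    proof (intro ballI allI impI)
      fix i j assume "i \<in> set ns" "(i, j) \<in> E"
      then have "j \<in> P" using ns(1) edge_cases[of i j] disjoint by blast
      then show "j \<notin> set ns \<and> level a b j = a" using ns(1) disjoint by auto
    qed
  qed
  moreover have "(\<lambda>v. if v \<in> set ns then 2 * a - b else level a b v) = level a (2 * a - b)"
    unfolding ns(1) level_def using disjoint by (auto simp: fun_eq_iff)
  ultimately show ?thesis by simp
qed

lemma flips_shift_path:
  "flip_path V E (level 0 1) (shift_path k) \<and> flips E (level 0 1) (shift_path k) = level (2 * k) (2 * k + 1)"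
proof -
  let ?f = "\<lambda>m. level (2 * m) (2 * m + 1)"
  have up: "flip_path V E (?f m) (ps @ ns) \<and> flips E (?f m) (ps @ ns) = ?f (m + 1)" for m
    using flips_ps[of "2 * m + 1" "2 * m"] flips_ns[of "2 * m + 1" "2 * m + 2"] by (simp add: algebra_simps)
  have down: "flip_path V E (?f m) (ns @ ps) \<and> flips E (?f m) (ns @ ps) = ?f (m + - 1)" for m
    using flips_ns[of "2 * m + 1" "2 * m"] flips_ps[of "2 * m - 1" "2 * m"] by (simp add: algebra_simps)
  show ?thesis
    using flips_concat_replicate[where f = ?f and m = 0 and n = "nat k", OF up]
      flips_concat_replicate[where f = ?f and m = 0 and n = "nat (- k)", OF down]
    unfolding shift_path_def signed_replicate_def by (cases "0 \<le> k") (simp_all add: algebra_simps)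
qed

lemma eq_level_if_orientation_of_eq:
  assumes "congruent_height V E (level 0 1) H" "orientation_of E H = orientation_of E (level 0 s)"
    and "s = 1 \<or> s = - 1"
  shows "\<exists>k. H = level (2 * k) (2 * k + s)"
proof -
  have H: "is_height E H" using assms(1) unfolding congruent_height_def by simp
  have G: "is_height E (level 0 s)" using is_height_level[of s 0] assms(3) by auto
  obtain v0 where v0: "v0 \<in> V" using nonempty by blast
  define c where "c = H v0 - level 0 s v0"
  have shift: "H v = level 0 s v + c" if "v \<in> V" for v
    using orientation_of_eq_imp_const_diff[OF connected H G assms(2) that v0] unfolding c_def by simp
  have "even (H v0 - level 0 1 v0)" using assms(1) unfolding congruent_height_def by blast
  moreover have "v0 \<in> P \<or> v0 \<in> N" using v0 V_eq by blast
  then have "even (level 0 s v0 - level 0 1 v0)" using assms(3) by auto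
  moreover have "c = (H v0 - level 0 1 v0) - (level 0 s v0 - level 0 1 v0)" unfolding c_def by simp
  ultimately have "even c" by simp
  then obtain k where k: "c = 2 * k" by (rule evenE)
  have "H v = level (2 * k) (2 * k + s) v" for v
  proof (cases "v \<in> V")
    case True
    then show ?thesis using shift[OF True] k V_eq by (cases "v \<in> P") auto
  next
    case False
    then show ?thesis using assms(1) unfolding congruent_height_def by simp
  qed
  then show ?thesis by blast
qed

lemma loop_flips_level:
  assumes "valid V D alternating w" "walk alternating w = alternating"
  shows "\<exists>k. flips E (level 0 1) (sigma_letters w) =
    level (2 * k) (if even (D_count w) then 2 * k + 1 else 2 * k - 1)"
proof -
  define s :: int where "s = (if even (D_count w) then 1 else - 1)"
  let ?L = "flips E (level 0 1) (sigma_letters w)"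
  have B: "is_height E (level 0 1)" and alt: "orientation_of E (level 0 1) = alternating"
    using is_height_level[of 1 0] orientation_of_level_up[of 0] by simp_all
  have path: "flip_path V E (level 0 1) (sigma_letters w)"
    using flip_path_sigma_letters[OF B] assms(1) alt by simp
  have "walk (orientation_of E ?L) (D_power (D_count w)) = alternating"
    using wequiv_imp_same_walk[OF wequiv_normal_form[OF assms(1)] assms(1)] assms(2)
      walk_sigma_word[OF B path] alt by simp
  then have "orientation_of E ?L = orientation_of E (level 0 s)"
    using orientation_of_level_up[of 0] orientation_of_level_down[of 0]
    unfolding s_def D_power_def by (cases "even (D_count w)") auto
  then obtain k where "?L = level (2 * k) (2 * k + s)"
    using eq_level_if_orientation_of_eq congruent_height_flips[OF B path] s_def by fastforce
  then show ?thesis unfolding s_def by auto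
qed

lemma sigma_word_shift_path_loop:
  "valid V D alternating (sigma_word (shift_path k)) \<and>
    walk alternating (sigma_word (shift_path k)) = alternating"
proof -
  have B: "is_height E (level 0 1)" using is_height_level[of 1 0] by simp
  have path: "flip_path V E (level 0 1) (shift_path k)" using flips_shift_path by blast
  show ?thesis
    using valid_sigma_word_iff_flip_path[OF B, of D] walk_sigma_word[OF B path] path flips_shift_path[of k]
      orientation_of_level_up[of 0] orientation_of_level_up[of "2 * k"] by simp
qed

lemma wequiv_loops_if_same_flips:
  assumes "valid V D alternating w" "valid V D alternating w'"
    and "flips E (level 0 1) (sigma_letters w) = flips E (level 0 1) (sigma_letters w')"
  shows "wequiv V E D alternating (sigma_word (sigma_letters w)) (sigma_word (sigma_letters w'))"
proof -
  have B: "is_height E (level 0 1)" and alt: "orientation_of E (level 0 1) = alternating"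
    using is_height_level[of 1 0] orientation_of_level_up[of 0] by simp_all
  show ?thesis
    using wequiv_if_same_flips[OF B] flip_path_sigma_letters[OF B] assms alt by simp
qed

lemma generates_aut_alternatingI:
  assumes loops: "\<forall>g\<in>set gs. valid V D alternating g \<and> walk alternating g = alternating"
    and realize: "\<And>k e. D \<or> e \<Longrightarrow> \<exists>ws. set ws \<subseteq> set gs \<and>
      flips E (level 0 1) (sigma_letters (concat ws)) = level (2 * k) (if e then 2 * k + 1 else 2 * k - 1) \<and>
      even (D_count (concat ws)) = e"
  shows "generates_aut V E D alternating gs"
proof (rule generates_autI[OF loops])
  fix w assume w: "valid V D alternating w" "walk alternating w = alternating"
  obtain k where k: "flips E (level 0 1) (sigma_letters w) =
      level (2 * k) (if even (D_count w) then 2 * k + 1 else 2 * k - 1)"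
    using loop_flips_level[OF w] by blast
  have "D \<or> even (D_count w)" using D_count_valid_R0[of V Q w for Q] w(1) by (cases D) auto
  then obtain ws where ws: "set ws \<subseteq> set gs"
    "flips E (level 0 1) (sigma_letters (concat ws)) = flips E (level 0 1) (sigma_letters w)"
    "even (D_count (concat ws)) = even (D_count w)"
    using realize k by metis
  moreover have "valid V D alternating (concat ws)"
    using valid_concat_loops[of ws] loops ws(1) by blast
  ultimately show "\<exists>ws. set ws \<subseteq> set gs \<and>
      wequiv V E D alternating (sigma_word (sigma_letters w)) (sigma_word (sigma_letters (concat ws))) \<and>
      even (D_count w) = even (D_count (concat ws))"
    using wequiv_loops_if_same_flips[OF w(1)] by metis
qed

theorem generates_aut_R0:
  "generates_aut V E False alternating [sigma_word ns @ sigma_word ps, sigma_word ps @ sigma_word ns]"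
  (is "generates_aut _ _ _ _ ?gs")
proof (rule generates_aut_alternatingI)
  have "shift_path 1 = ps @ ns" "shift_path (- 1) = ns @ ps"
    unfolding shift_path_def signed_replicate_def by simp_all
  then show "\<forall>g\<in>set ?gs. valid V False alternating g \<and> walk alternating g = alternating"
    using sigma_word_shift_path_loop[of False 1] sigma_word_shift_path_loop[of False "- 1"] by auto
  fix k :: int and e assume e: "False \<or> e"
  define ws where "ws = signed_replicate k (sigma_word ps @ sigma_word ns) (sigma_word ns @ sigma_word ps)"
  have "set ws \<subseteq> set ?gs"
    unfolding ws_def using set_signed_replicate by fastforce
  moreover have "sigma_letters (concat ws) = shift_path k"
    unfolding ws_def shift_path_def by (simp add: sigma_letters_concat)
  moreover have "D_count (concat ws) = 0"
    unfolding ws_def signed_replicate_def by (simp add: D_count_concat_replicate)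
  ultimately show "\<exists>ws. set ws \<subseteq> set ?gs \<and>
      flips E (level 0 1) (sigma_letters (concat ws)) = level (2 * k) (if e then 2 * k + 1 else 2 * k - 1) \<and>
      even (D_count (concat ws)) = e"
    using flips_shift_path[of k] e by auto
qed

theorem generates_aut_R:
  "generates_aut V E True alternating [sigma_word ps @ [(Dg, False)], sigma_word ns @ [(Dg, False)]]"
  (is "generates_aut _ _ _ _ [?g1, ?g2]")
proof (rule generates_aut_alternatingI)
  have B: "is_height E (level 0 1)" and alt: "orientation_of E (level 0 1) = alternating"
    using is_height_level[of 1 0] orientation_of_level_up[of 0] by simp_all
  have "valid V True alternating (sigma_word ps) \<and> walk alternating (sigma_word ps) = alternating\<inverse>"
    using flips_ps[of 1 0] valid_sigma_word_iff_flip_path[OF B] walk_sigma_word[OF B]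
      orientation_of_level_down[of 2] alt by simp
  moreover have "valid V True alternating (sigma_word ns) \<and> walk alternating (sigma_word ns) = alternating\<inverse>"
    using flips_ns[of 1 0] valid_sigma_word_iff_flip_path[OF B] walk_sigma_word[OF B]
      orientation_of_level_down[of 0] alt by simp
  ultimately show "\<forall>g\<in>set [?g1, ?g2]. valid V True alternating g \<and> walk alternating g = alternating"
    by simp
  fix k :: int and e :: bool
  define k' where "k' = (if e then k else k - 1)"
  define ws where "ws = concat (signed_replicate k' [?g1, ?g2] [?g2, ?g1]) @ (if e then [] else [?g1])"
  have "set (signed_replicate k' [?g1, ?g2] [?g2, ?g1]) \<subseteq> {[?g1, ?g2], [?g2, ?g1]}"
    by (rule set_signed_replicate)
  then have "set ws \<subseteq> set [?g1, ?g2]"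
    unfolding ws_def by auto
  moreover have "sigma_letters (concat ws) = shift_path k' @ (if e then [] else ps)"
    unfolding ws_def shift_path_def by (simp add: sigma_letters_concat map_concat concat_concat)
  moreover have "flips E (level 0 1) (shift_path k' @ (if e then [] else ps)) =
      level (2 * k) (if e then 2 * k + 1 else 2 * k - 1)"
  proof (cases e)
    case True
    then show ?thesis using flips_shift_path[of k] unfolding k'_def by simp
  next
    case False
    have "flips E (level 0 1) (shift_path (k - 1)) = level (2 * k - 2) (2 * k - 1)"
      using flips_shift_path[of "k - 1"] by (simp add: algebra_simps)
    then show ?thesis using False flips_ps[of "2 * k - 1" "2 * k - 2"] unfolding k'_def by simp
  qed
  moreover have "even (D_count (concat ws)) = e"
    unfolding ws_def using even_D_count_concat_signed_replicate[of "?g1 @ ?g2" "?g2 @ ?g1" k']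
    by (simp add: concat_concat)
  ultimately show "\<exists>ws. set ws \<subseteq> set [?g1, ?g2] \<and>
      flips E (level 0 1) (sigma_letters (concat ws)) = level (2 * k) (if e then 2 * k + 1 else 2 * k - 1) \<and>
      even (D_count (concat ws)) = e"
    by auto
qed

end

section \<open>The one-vertex tree\<close>

lemma act_empty [simp]: "act g {} = {}"
  by (cases g) (auto simp: refl_at_def)

lemma walk_empty [simp]: "walk {} w = {}"
  by (induction w) auto

lemma valid_sigma_word_single_vertex: "V = {v} \<Longrightarrow> set xs \<subseteq> {v} \<Longrightarrow> valid V D {} (sigma_word xs)"
  by (induction xs) (auto simp: is_source_def simp flip: act.simps)

lemma wequiv_sigma_word_single_vertex:
  assumes "V = {v}" "set xs \<subseteq> {v}"
  shows "wequiv V E D {} (sigma_word xs) (sigma_word (replicate (length xs mod 2) v))"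
  using assms(2)
proof (induction xs rule: induct_list012)
  case (3 x y xs)
  then have "x = v" "y = v" by auto
  have "wequiv V E D {} ([] @ [(Sg v, False), (Sg v, False)] @ sigma_word xs) ([] @ [] @ sigma_word xs)"
    using rel_imp_wequiv[of V E D "{}" "[]" "[(Sg v, False), (Sg v, False)]" "[]" "sigma_word xs"]
      rel_square[of V D "{}" "Sg v" E] valid_sigma_word_single_vertex[OF assms(1)] 3(3) assms(1)
    by (simp add: is_source_def)
  also have "wequiv V E D {} \<dots> (sigma_word (replicate (length xs mod 2) v))"
    using 3 by simp
  finally show ?case using \<open>x = v\<close> \<open>y = v\<close> by simp
qed auto

lemma generates_aut_single_vertex_R0:
  assumes "V = {v}"
  shows "generates_aut V E False {} [[(Sg v, False)], [(Sg v, False)]]"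
proof (rule generates_autI)
  show "\<forall>g\<in>set [[(Sg v, False)], [(Sg v, False)]]. valid V False {} g \<and> walk {} g = {}"
    using assms by (simp add: is_source_def)
  fix w assume w: "valid V False {} w" "walk {} w = {}"
  define ws where "ws = replicate (length (sigma_letters w) mod 2) [(Sg v, False)]"
  show "\<exists>ws. set ws \<subseteq> set [[(Sg v, False)], [(Sg v, False)]] \<and>
      wequiv V E False {} (sigma_word (sigma_letters w)) (sigma_word (sigma_letters (concat ws))) \<and>
      even (D_count w) = even (D_count (concat ws))"
  proof (intro exI conjI)
    show "set ws \<subseteq> set [[(Sg v, False)], [(Sg v, False)]]" unfolding ws_def by auto
    have "set (sigma_letters w) \<subseteq> {v}" using set_sigma_letters_valid[OF w(1)] assms by simp
    moreover have "sigma_letters (concat ws) = replicate (length (sigma_letters w) mod 2) v"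
      unfolding ws_def by (simp add: sigma_letters_concat)
    ultimately show "wequiv V E False {} (sigma_word (sigma_letters w)) (sigma_word (sigma_letters (concat ws)))"
      using wequiv_sigma_word_single_vertex[OF assms] by simp
    show "even (D_count w) = even (D_count (concat ws))"
      using D_count_valid_R0[OF w(1)] unfolding ws_def by (simp add: D_count_concat_replicate)
  qed
qed

lemma generates_aut_single_vertex_R:
  assumes "V = {v}" "set gs = {[(Sg v, False), (Dg, False)], [(Dg, False)]}"
  shows "generates_aut V E True {} gs"
proof (rule generates_autI)
  show "\<forall>g\<in>set gs. valid V True {} g \<and> walk {} g = {}"
    unfolding assms(2) using assms(1) by (simp add: is_source_def)
  fix w assume w: "valid V True {} w" "walk {} w = {}"
  define e where "e = length (sigma_letters w) mod 2"
  define f where "f = (if even (D_count w) = even e then 0 else 1 :: nat)"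
  define ws where "ws = replicate e [(Sg v, False), (Dg, False)] @ replicate f [(Dg, False)]"
  show "\<exists>ws. set ws \<subseteq> set gs \<and>
      wequiv V E True {} (sigma_word (sigma_letters w)) (sigma_word (sigma_letters (concat ws))) \<and>
      even (D_count w) = even (D_count (concat ws))"
  proof (intro exI conjI)
    show "set ws \<subseteq> set gs" unfolding ws_def assms(2) by (simp add: set_replicate_conv_if)
    have ws: "sigma_letters (concat ws) = replicate e v" "D_count (concat ws) = e + f"
      unfolding ws_def by (simp_all add: sigma_letters_concat D_count_concat_replicate)
    have "set (sigma_letters w) \<subseteq> {v}" using set_sigma_letters_valid[OF w(1)] assms(1) by simp
    then show "wequiv V E True {} (sigma_word (sigma_letters w)) (sigma_word (sigma_letters (concat ws)))"
      using wequiv_sigma_word_single_vertex[OF assms(1)] ws(1) unfolding e_def by simp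
    show "even (D_count w) = even (D_count (concat ws))"
      unfolding ws(2) f_def by auto
  qed
qed

lemma distinct_set_singleton: "distinct xs \<Longrightarrow> set xs = {x} \<Longrightarrow> xs = [x]"
  by (cases xs) (auto simp: subset_singleton_iff)

lemma generates_aut_single_vertex:
  assumes V: "V = {v}" and "V = P \<union> N" "P \<inter> N = {}"
    and "set ps = P" "distinct ps" "set ns = N" "distinct ns"
  shows "generates_aut V E False {} [sigma_word ns @ sigma_word ps, sigma_word ps @ sigma_word ns]
    \<and> generates_aut V E True {} [sigma_word ps @ [(Dg, False)], sigma_word ns @ [(Dg, False)]]"
proof -
  have "ps = [v] \<and> ns = [] \<or> ps = [] \<and> ns = [v]"
  proof (cases "v \<in> P")
    case True
    then have "P = {v}" "N = {}" using assms(2,3) V by auto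
    then show ?thesis using assms(4-7) distinct_set_singleton by auto
  next
    case False
    then have "P = {}" "N = {v}" using assms(2) V by auto
    then show ?thesis using assms(4-7) distinct_set_singleton by auto
  qed
  moreover have "set [[(Sg v, False), (Dg, False)], [(Dg, False)]] = {[(Sg v, False), (Dg, False)], [(Dg, False)]}"
    and "set [[(Dg, False)], [(Sg v, False), (Dg, False)]] = {[(Sg v, False), (Dg, False)], [(Dg, False)]}"
    by (simp_all add: insert_commute)
  ultimately show ?thesis
    using generates_aut_single_vertex_R0[OF V, of E] generates_aut_single_vertex_R[OF V]
    by (elim disjE conjE) simp_all
qed

lemma connected_isolated_imp_singleton:
  assumes "\<forall>u\<in>V. \<forall>v\<in>V. (u, v) \<in> E\<^sup>*" "v \<in> V" "\<forall>u. (v, u) \<notin> E"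
  shows "V = {v}"
proof -
  have "u = v" if "u \<in> V" for u
    using assms that converse_rtranclE[of v u E] by blast
  with assms(2) show ?thesis by blast
qed

lemma simple_graph_single_vertex: "simple_graph {v} E \<Longrightarrow> E = {}"
  unfolding simple_graph_def by fast

theorem mainTheorem13:
  fixes V :: "'v set" and E :: "('v \<times> 'v) set" and P N :: "'v set" and ps ns :: "'v list"
  assumes "is_tree V E"
    and "V = P \<union> N" and "P \<inter> N = {}"
    and "\<forall>a\<in>P. \<forall>b\<in>P. (a, b) \<notin> E" and "\<forall>a\<in>N. \<forall>b\<in>N. (a, b) \<notin> E"
    and "set ps = P" and "distinct ps" and "set ns = N" and "distinct ns"
  defines "\<Gamma>0 \<equiv> {(a, b). (a, b) \<in> E \<and> a \<in> P}"
    and "Splus \<equiv> map (\<lambda>i. (Sg i, False)) ps"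
    and "Sminus \<equiv> map (\<lambda>i. (Sg i, False)) ns"
  shows "generates_aut V E False \<Gamma>0 [Sminus @ Splus, Splus @ Sminus]
       \<and> generates_aut V E True \<Gamma>0 [Splus @ [(Dg, False)], Sminus @ [(Dg, False)]]"
proof -
  have graph: "simple_graph V E" and nonempty: "V \<noteq> {}" and connected: "\<forall>u\<in>V. \<forall>v\<in>V. (u, v) \<in> E\<^sup>*"
    using assms(1) unfolding is_tree_def by auto
  have S: "Splus = sigma_word ps" "Sminus = sigma_word ns"
    by (simp_all add: Splus_def Sminus_def sigma_word_def)
  show ?thesis
  proof (cases "\<forall>v\<in>V. \<exists>u. (v, u) \<in> E")
    case True
    interpret connected_bipartite V E P N ps ns
      using graph True assms(2-9) connected nonempty by unfold_locales simp_all
    have "\<Gamma>0 = alternating" unfolding \<Gamma>0_def alternating_def ..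
    then show ?thesis using generates_aut_R0 generates_aut_R S by simp
  next
    case False
    then obtain v where "v \<in> V" "\<forall>u. (v, u) \<notin> E" by blast
    then have V: "V = {v}" using connected_isolated_imp_singleton[OF connected] by blast
    with graph have "E = {}" by (simp add: simple_graph_single_vertex)
    then have "\<Gamma>0 = {}" unfolding \<Gamma>0_def by simp
    then show ?thesis using generates_aut_single_vertex[OF V assms(2,3,6-9)] S by simp
  qed
qed

end
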